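(* Let $p$ be a prime, $M$ an $m'\times m$ matrix over $\mathbb{F}_p$, $1\le L\le p$ an integer, and $\mathbf{L}=(L_1,\dots,L_m)$ integers with $L\le L_i\le2L$. Then for every $\mathbf{b}\in\mathbb{Z}^{m'}$, $$|\{\mathbf{x}\in D_{\mathbf{L}}:M\mathbf{x}\equiv\mathbf{b}\pmod p\}|\ll_m|\{\mathbf{x}\in D_{\mathbf{L}}:M\mathbf{x}\equiv\mathbf{0}\pmod p\}|.$$
   Context: $D_{\mathbf{L}}=\prod_{i=1}^m\{x\in\mathbb{Z}:-L_i\le x\le L_i\}$. *)

theory Defs
  imports Complex_Main "HOL-Number_Theory.Cong"
begin

definition box :: "nat \<Rightarrow> (nat \<Rightarrow> int) \<Rightarrow> (nat \<Rightarrow> int) set" where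
  "box m Ls = {x. (\<forall>i<m. - Ls i \<le> x i \<and> x i \<le> Ls i) \<and> (\<forall>i\<ge>m. x i = 0)}"

text \<open>Number of x in D_L with M x = b (mod p), M an m' x m matrix with integer
  representatives of its F_p entries.\<close>
definition sol_count ::
  "int \<Rightarrow> nat \<Rightarrow> nat \<Rightarrow> (nat \<Rightarrow> nat \<Rightarrow> int) \<Rightarrow> (nat \<Rightarrow> int) \<Rightarrow> (nat \<Rightarrow> int) \<Rightarrow> nat" where
  "sol_count p m' m M Ls b =
     card {x \<in> box m Ls. \<forall>j<m'. [(\<Sum>i<m. M j i * x i) = b j] (mod p)}"

end

theory Submission
  imports Defs "HOL-Library.FuncSet"
begin

text \<open>Split the solutions of \<open>M x = b\<close> in the box according to the sign pattern of \<open>x\<close>.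
  Subtracting a fixed solution maps those with a given sign pattern injectively into the
  homogeneous solutions: two integers of equal sign in \<open>[-L\<^sub>i, L\<^sub>i]\<close> differ by at most
  \<open>L\<^sub>i\<close> in absolute value.  There are \<open>2^m\<close> sign patterns, so \<open>C = 2^m\<close> works
  for every modulus and every box.\<close>

definition solutions ::
  "int \<Rightarrow> nat \<Rightarrow> nat \<Rightarrow> (nat \<Rightarrow> nat \<Rightarrow> int) \<Rightarrow> (nat \<Rightarrow> int) \<Rightarrow> (nat \<Rightarrow> int) \<Rightarrow> (nat \<Rightarrow> int) set"
  where "solutions p m' m M Ls b =
    {x \<in> box m Ls. \<forall>j<m'. [(\<Sum>i<m. M j i * x i) = b j] (mod p)}"

lemma sol_count_eq_card_solutions: "sol_count p m' m M Ls b = card (solutions p m' m M Ls b)"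
  by (simp add: sol_count_def solutions_def)

lemma finite_box: "finite (box m Ls)"
proof -
  let ?ext = "\<lambda>(f::nat \<Rightarrow> int) i. if i < m then f i else 0"
  have "box m Ls \<subseteq> ?ext ` PiE {..<m} (\<lambda>i. {-Ls i..Ls i})"
  proof
    fix x assume x: "x \<in> box m Ls"
    then have "restrict x {..<m} \<in> PiE {..<m} (\<lambda>i. {-Ls i..Ls i})"
      and "x = ?ext (restrict x {..<m})"
      by (auto simp: box_def)
    then show "x \<in> ?ext ` PiE {..<m} (\<lambda>i. {-Ls i..Ls i})" by blast
  qed
  moreover have "finite (PiE {..<m} (\<lambda>i. {-Ls i..Ls i}))" by (intro finite_PiE) auto
  ultimately show ?thesis by (meson finite_imageI finite_subset)
qed

lemma finite_solutions: "finite (solutions p m' m M Ls b)"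
  unfolding solutions_def by (rule finite_subset[OF _ finite_box]) blast

lemma diff_in_box_if_same_signs:
  assumes "x \<in> box m Ls" "y \<in> box m Ls" "\<forall>i<m. 0 \<le> x i \<longleftrightarrow> 0 \<le> y i"
  shows "(\<lambda>i. x i - y i) \<in> box m Ls"
  unfolding box_def
proof (intro CollectI conjI allI impI)
  fix i assume "i < m"
  then have "- Ls i \<le> x i" "x i \<le> Ls i" "- Ls i \<le> y i" "y i \<le> Ls i"
    and "0 \<le> x i \<longleftrightarrow> 0 \<le> y i"
    using assms by (auto simp: box_def)
  then show "- Ls i \<le> x i - y i" "x i - y i \<le> Ls i" by (cases "0 \<le> x i"; simp)+
next
  fix i assume "m \<le> i"
  then show "x i - y i = 0" using assms by (simp add: box_def)
qed

lemma diff_of_solutions: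
  assumes "x \<in> solutions p m' m M Ls b" "y \<in> solutions p m' m M Ls b"
    and "\<forall>i<m. 0 \<le> x i \<longleftrightarrow> 0 \<le> y i"
  shows "(\<lambda>i. x i - y i) \<in> solutions p m' m M Ls (\<lambda>_. 0)"
proof -
  have "[(\<Sum>i<m. M j i * (x i - y i)) = 0] (mod p)" if "j < m'" for j
  proof -
    have "[(\<Sum>i<m. M j i * x i) - (\<Sum>i<m. M j i * y i) = b j - b j] (mod p)"
      using assms(1,2) \<open>j < m'\<close> by (intro cong_diff) (simp_all add: solutions_def)
    then show ?thesis by (simp add: right_diff_distrib sum_subtractf)
  qed
  moreover have "(\<lambda>i. x i - y i) \<in> box m Ls"
    using assms by (intro diff_in_box_if_same_signs) (simp_all add: solutions_def)
  ultimately show ?thesis by (simp add: solutions_def)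
qed

definition sign_class :: "nat \<Rightarrow> nat set \<Rightarrow> (nat \<Rightarrow> int) set"
  where "sign_class m T = {x. \<forall>i<m. 0 \<le> x i \<longleftrightarrow> i \<in> T}"

lemma solutions_eq_UN_sign_class:
  "solutions p m' m M Ls b = (\<Union>T\<in>Pow {..<m}. solutions p m' m M Ls b \<inter> sign_class m T)"
proof (intro equalityI subsetI)
  fix x assume "x \<in> solutions p m' m M Ls b"
  then have "x \<in> solutions p m' m M Ls b \<inter> sign_class m {i. i < m \<and> 0 \<le> x i}"
    by (auto simp: sign_class_def)
  then show "x \<in> (\<Union>T\<in>Pow {..<m}. solutions p m' m M Ls b \<inter> sign_class m T)"
    by (rule UN_I[rotated]) auto
qed auto

lemma card_solutions_sign_class_le:
  "card (solutions p m' m M Ls b \<inter> sign_class m T) \<le> card (solutions p m' m M Ls (\<lambda>_. 0))"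
proof (cases "solutions p m' m M Ls b \<inter> sign_class m T = {}")
  case False
  then obtain y where y: "y \<in> solutions p m' m M Ls b \<inter> sign_class m T" by blast
  let ?shift = "\<lambda>x i. x i - y i"
  have "inj_on ?shift (solutions p m' m M Ls b \<inter> sign_class m T)"
    by (rule inj_onI) (simp add: fun_eq_iff)
  moreover have "?shift ` (solutions p m' m M Ls b \<inter> sign_class m T)
      \<subseteq> solutions p m' m M Ls (\<lambda>_. 0)"
  proof (rule image_subsetI)
    fix x assume x: "x \<in> solutions p m' m M Ls b \<inter> sign_class m T"
    have "\<forall>i<m. 0 \<le> x i \<longleftrightarrow> 0 \<le> y i"
      using x y by (simp add: sign_class_def)
    with x y show "?shift x \<in> solutions p m' m M Ls (\<lambda>_. 0)"
      by (intro diff_of_solutions[where b = b]) simp_all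
  qed
  ultimately show ?thesis
    by (rule card_inj_on_le[OF _ _ finite_solutions])
qed simp

lemma sol_count_le_pow2_homogeneous:
  "sol_count p m' m M Ls b \<le> 2 ^ m * sol_count p m' m M Ls (\<lambda>_. 0)"
proof -
  have "card (solutions p m' m M Ls b)
      \<le> (\<Sum>T\<in>Pow {..<m}. card (solutions p m' m M Ls b \<inter> sign_class m T))"
    by (subst solutions_eq_UN_sign_class) (rule card_UN_le, simp)
  also have "\<dots> \<le> (\<Sum>T\<in>Pow {..<m}. card (solutions p m' m M Ls (\<lambda>_. 0)))"
    by (intro sum_mono card_solutions_sign_class_le)
  also have "\<dots> = 2 ^ m * card (solutions p m' m M Ls (\<lambda>_. 0))"
    by (simp add: card_Pow)
  finally show ?thesis by (simp add: sol_count_eq_card_solutions)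
qed

theorem lemma5p3:
  fixes m :: nat
  shows "\<exists>C :: real. C > 0 \<and>
    (\<forall>(p::int) (m'::nat) (M :: nat \<Rightarrow> nat \<Rightarrow> int) (L::int) (Ls :: nat \<Rightarrow> int) (b :: nat \<Rightarrow> int).
       prime p \<longrightarrow> 1 \<le> L \<longrightarrow> L \<le> p \<longrightarrow> (\<forall>i<m. L \<le> Ls i \<and> Ls i \<le> 2 * L) \<longrightarrow>
       real (sol_count p m' m M Ls b) \<le> C * real (sol_count p m' m M Ls (\<lambda>_. 0)))"
proof (intro exI[of _ "2 ^ m"] conjI allI impI)
  fix p m' M Ls b
  show "real (sol_count p m' m M Ls b) \<le> 2 ^ m * real (sol_count p m' m M Ls (\<lambda>_. 0))"
    using sol_count_le_pow2_homogeneous[of p m' m M Ls b] of_nat_mono by fastforce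
qed simp

end
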